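(* Let $X$ be a metric space and $n\ge0$. Suppose that for every $r>0$ there is a subspace $X_r\subset X$ such that $\operatorname{asdim}(X_r)\le n$ and $r\text{-}\dim(X\setminus X_r)\le n$. Then $\operatorname{asdim}(X)\le n$.
   Context: For $r>0$, the $r$-components of a set $C$ in a metric space are the equivalence classes of points of $C$ joined by finite sequences in $C$ with consecutive distances $\le r$. The $r$-scale dimension $r\text{-}\dim(Z)$ of a metric space $Z$ is the smallest $n\ge0$ such that $Z=Z_1\cup\dots\cup Z_{n+1}$ where, for each $i$, the $r$-components of $Z_i$ have uniformly bounded diameters. $\operatorname{asdim}(Z)\le n$ iff for every $r>0$ there are $D<\infty$ and a decomposition $Z=Z_1\cup\dots\cup Z_{n+1}$ such that all $r$-components of each $Z_i$ have diameter $\le D$ (i.e. $r\text{-}\dim(Z)\le n$ for all $r>0$). *)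

theory Defs
  imports "HOL-Analysis.Analysis"
begin

definition r_chained :: "real \<Rightarrow> 'a::metric_space set \<Rightarrow> 'a \<Rightarrow> 'a \<Rightarrow> bool" where
  "r_chained r C x y \<longleftrightarrow>
     (\<exists>(k::nat) p. p 0 = x \<and> p k = y \<and> (\<forall>i\<le>k. p i \<in> C) \<and>
                  (\<forall>i<k. dist (p i) (p (Suc i)) \<le> r))"

definition r_components :: "real \<Rightarrow> 'a::metric_space set \<Rightarrow> 'a set set" where
  "r_components r C = {{y \<in> C. r_chained r C x y} | x. x \<in> C}"

definition r_bounded_components :: "real \<Rightarrow> 'a::metric_space set \<Rightarrow> bool" where
  "r_bounded_components r C \<longleftrightarrow>
     (\<exists>D::real. \<forall>K\<in>r_components r C. \<forall>x\<in>K. \<forall>y\<in>K. dist x y \<le> D)"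

definition r_dim_le :: "real \<Rightarrow> 'a::metric_space set \<Rightarrow> nat \<Rightarrow> bool" where
  "r_dim_le r Z n \<longleftrightarrow>
     (\<exists>Zs :: nat \<Rightarrow> 'a set. Z = (\<Union>i\<le>n. Zs i) \<and> (\<forall>i\<le>n. r_bounded_components r (Zs i)))"

definition asdim_le :: "'a::metric_space set \<Rightarrow> nat \<Rightarrow> bool" where
  "asdim_le Z n \<longleftrightarrow> (\<forall>r>0. r_dim_le r Z n)"

end

theory Submission
  imports Defs
begin

text \<open>Fix r > 0. Cover X - X_r by B_0, ..., B_n whose r-components have diameter
  at most D, and then X_r by A_0, ..., A_n whose (D + 2r)-components have diameter at
  most E. An r-chain in A_i \<union> B_i alternates between points of A_i and excursions
  through B_i; two consecutive A_i-points are separated by at most one r-jump in,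
  an r-chain in B_i and one r-jump out, hence are at distance at most D + 2r. So the
  A_i-points of the chain form a (D + 2r)-chain in A_i, and the r-components of
  A_i \<union> B_i have diameter at most E + 2(D + r).\<close>

definition r_step :: "real \<Rightarrow> 'a::metric_space set \<Rightarrow> ('a \<times> 'a) set" where
  "r_step r C = {(u, v). u \<in> C \<and> v \<in> C \<and> dist u v \<le> r}"

lemma r_chained_in: "r_chained r C x y \<Longrightarrow> x \<in> C \<and> y \<in> C"
  unfolding r_chained_def by auto

lemma r_chained_iff_rtrancl: "r_chained r C x y \<longleftrightarrow> x \<in> C \<and> (x, y) \<in> (r_step r C)\<^sup>*"
proof
  assume "r_chained r C x y"
  then obtain k p where p: "p 0 = x" "p k = y" "\<forall>i\<le>k. p i \<in> C"
      "\<forall>i<k. dist (p i) (p (Suc i)) \<le> r"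
    unfolding r_chained_def by blast
  then have "\<forall>i<k. (p i, p (Suc i)) \<in> r_step r C"
    by (simp add: r_step_def)
  with p(1,2) have "(x, y) \<in> r_step r C ^^ k"
    unfolding relpow_fun_conv by blast
  then show "x \<in> C \<and> (x, y) \<in> (r_step r C)\<^sup>*"
    using p(1,3) unfolding rtrancl_power by auto
next
  assume "x \<in> C \<and> (x, y) \<in> (r_step r C)\<^sup>*"
  then obtain k p where p: "x \<in> C" "p 0 = x" "p k = y"
      "\<forall>i<k. (p i, p (Suc i)) \<in> r_step r C"
    unfolding rtrancl_power relpow_fun_conv by blast
  have "p i \<in> C" if "i \<le> k" for i
    using that p(1,2,4) by (cases i) (auto simp: r_step_def)
  with p show "r_chained r C x y"
    unfolding r_chained_def r_step_def by blast
qed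

lemma r_chained_refl: "x \<in> C \<Longrightarrow> r_chained r C x x"
  by (simp add: r_chained_iff_rtrancl)

lemma r_chained_snoc:
  assumes "r_chained r C x y" "z \<in> C" "dist y z \<le> r"
  shows "r_chained r C x z"
proof -
  have "(y, z) \<in> r_step r C"
    using assms r_chained_in[OF assms(1)] by (simp add: r_step_def)
  with assms(1) show ?thesis
    unfolding r_chained_iff_rtrancl by (meson rtrancl_into_rtrancl)
qed

lemma r_chained_induct [consumes 1, case_names base step]:
  assumes "r_chained r C x y" "P x"
    "\<And>y z. r_chained r C x y \<Longrightarrow> P y \<Longrightarrow> z \<in> C \<Longrightarrow> dist y z \<le> r \<Longrightarrow> P z"
  shows "P y"
proof -
  have "x \<in> C" "(x, y) \<in> (r_step r C)\<^sup>*"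
    using assms(1) by (auto simp: r_chained_iff_rtrancl)
  from this(2) show "P y"
  proof (induction rule: rtrancl_induct)
    case (step y z)
    then show ?case
      using assms(2,3) \<open>x \<in> C\<close> by (auto simp: r_step_def r_chained_iff_rtrancl)
  qed (use assms(2) in simp)
qed

lemma r_bounded_components_iff:
  "r_bounded_components r C \<longleftrightarrow> (\<exists>D. \<forall>x y. r_chained r C x y \<longrightarrow> dist x y \<le> D)"
proof
  assume "r_bounded_components r C"
  then obtain D where D: "\<forall>K\<in>r_components r C. \<forall>x\<in>K. \<forall>y\<in>K. dist x y \<le> D"
    unfolding r_bounded_components_def by blast
  have "dist x y \<le> D" if xy: "r_chained r C x y" for x y
  proof -
    have "{z \<in> C. r_chained r C x z} \<in> r_components r C"
      using r_chained_in[OF xy] unfolding r_components_def by blast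
    then show ?thesis
      using D r_chained_in[OF xy] r_chained_refl xy by fastforce
  qed
  then show "\<exists>D. \<forall>x y. r_chained r C x y \<longrightarrow> dist x y \<le> D" by blast
next
  assume "\<exists>D. \<forall>x y. r_chained r C x y \<longrightarrow> dist x y \<le> D"
  then obtain D where D: "\<And>x y. r_chained r C x y \<Longrightarrow> dist x y \<le> D" by blast
  have "dist u v \<le> 2 * D" if "K \<in> r_components r C" "u \<in> K" "v \<in> K" for K u v
  proof -
    obtain x where "K = {y \<in> C. r_chained r C x y}"
      using \<open>K \<in> r_components r C\<close> unfolding r_components_def by blast
    then have "dist x u \<le> D" "dist x v \<le> D"
      using D that by auto
    then show ?thesis
      using dist_triangle3[of u v x] by linarith
  qed
  then show "r_bounded_components r C"
    unfolding r_bounded_components_def by blast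
qed

lemma r_dim_le_uniform_bound:
  assumes "r_dim_le r Z n"
  obtains Zs D where "Z = (\<Union>i\<le>n. Zs i)" "0 \<le> D"
    "\<And>i x y. i \<le> n \<Longrightarrow> r_chained r (Zs i) x y \<Longrightarrow> dist x y \<le> D"
proof -
  obtain Zs where Zs: "Z = (\<Union>i\<le>n. Zs i)" "\<forall>i\<le>n. r_bounded_components r (Zs i)"
    using assms unfolding r_dim_le_def by blast
  then have "\<forall>i\<in>{..n}. \<exists>D. \<forall>x y. r_chained r (Zs i) x y \<longrightarrow> dist x y \<le> D"
    by (simp add: r_bounded_components_iff)
  then obtain Ds where Ds: "\<And>i x y. i \<le> n \<Longrightarrow> r_chained r (Zs i) x y \<Longrightarrow> dist x y \<le> Ds i"
    by (metis atMost_iff bchoice)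
  define D where "D = Max (insert 0 (Ds ` {..n}))"
  have "Ds i \<le> D" if "i \<le> n" for i
    unfolding D_def using that by (intro Max_ge) auto
  then have "\<And>i x y. i \<le> n \<Longrightarrow> r_chained r (Zs i) x y \<Longrightarrow> dist x y \<le> D"
    using Ds order_trans by blast
  moreover have "0 \<le> D"
    unfolding D_def by (intro Max_ge) auto
  ultimately show ?thesis
    using that Zs(1) by blast
qed

definition r_excursion :: "real \<Rightarrow> 'a::metric_space set \<Rightarrow> 'a \<Rightarrow> 'a \<Rightarrow> bool" where
  "r_excursion r B a y \<longleftrightarrow> y = a \<or> (\<exists>b. dist a b \<le> r \<and> r_chained r B b y)"

lemma r_excursion_snoc:
  "r_excursion r B a y \<Longrightarrow> z \<in> B \<Longrightarrow> dist y z \<le> r \<Longrightarrow> r_excursion r B a z"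
  unfolding r_excursion_def by (metis r_chained_refl r_chained_snoc)

lemma r_excursion_dist_le:
  assumes "\<And>u v. r_chained r B u v \<Longrightarrow> dist u v \<le> D" "0 \<le> D" "0 \<le> r"
    and "r_excursion r B a y"
  shows "dist a y \<le> D + r"
  using assms(4) unfolding r_excursion_def
proof
  assume "\<exists>b. dist a b \<le> r \<and> r_chained r B b y"
  then obtain b where "dist a b \<le> r" "dist b y \<le> D"
    using assms(1) by blast
  then show ?thesis
    using dist_triangle[of a y b] by linarith
qed (use assms(2,3) in simp)

lemma r_chained_union_cases:
  assumes B: "\<And>u v. r_chained r B u v \<Longrightarrow> dist u v \<le> D" and "0 \<le> D" "0 \<le> r"
    and "r_chained r (A \<union> B) x y"
  shows "r_chained r B x y \<or>
    (\<exists>a a'. dist x a \<le> D + r \<and> r_chained (D + 2 * r) A a a' \<and> r_excursion r B a' y)"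
  using assms(4)
proof (induction rule: r_chained_induct)
  case base
  have "x \<in> A \<union> B"
    using r_chained_in[OF assms(4)] by blast
  then show ?case
    using r_chained_refl[of x] \<open>0 \<le> D\<close> \<open>0 \<le> r\<close> unfolding r_excursion_def by force
next
  case (step y z)
  show ?case
  proof (cases "z \<in> B")
    case True
    then show ?thesis
      using step.IH r_chained_snoc r_excursion_snoc step.hyps(3) by metis
  next
    case False
    then have "z \<in> A"
      using step.hyps(2) by blast
    from step.IH show ?thesis
    proof
      assume "r_chained r B x y"
      then have "dist x z \<le> D + r"
        using B dist_triangle[of x z y] step.hyps(3) by fastforce
      then show ?thesis
        using \<open>z \<in> A\<close> r_chained_refl unfolding r_excursion_def by blast
    next
      assume "\<exists>a a'. dist x a \<le> D + r \<and> r_chained (D + 2 * r) A a a' \<and> r_excursion r B a' y"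
      then obtain a a' where a: "dist x a \<le> D + r" "r_chained (D + 2 * r) A a a'"
          "r_excursion r B a' y"
        by blast
      have "dist a' z \<le> D + 2 * r"
        using r_excursion_dist_le[OF B assms(2,3) a(3)] dist_triangle[of a' z y] step.hyps(3)
        by linarith
      then have "r_chained (D + 2 * r) A a z"
        using r_chained_snoc[OF a(2) \<open>z \<in> A\<close>] by blast
      then show ?thesis
        using a(1) unfolding r_excursion_def by blast
    qed
  qed
qed

lemma r_chained_union_dist_le:
  assumes B: "\<And>u v. r_chained r B u v \<Longrightarrow> dist u v \<le> D"
    and A: "\<And>u v. r_chained (D + 2 * r) A u v \<Longrightarrow> dist u v \<le> E"
    and "0 \<le> D" "0 \<le> E" "0 \<le> r"
    and "r_chained r (A \<union> B) x y"
  shows "dist x y \<le> E + 2 * (D + r)"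
  using r_chained_union_cases[OF B assms(3,5,6)]
proof
  assume "r_chained r B x y"
  then show ?thesis
    using B assms(3-5) by force
next
  assume "\<exists>a a'. dist x a \<le> D + r \<and> r_chained (D + 2 * r) A a a' \<and> r_excursion r B a' y"
  then obtain a a' where "dist x a \<le> D + r" "dist a a' \<le> E" "dist a' y \<le> D + r"
    using A r_excursion_dist_le[OF B assms(3,5)] by blast
  then show ?thesis
    using dist_triangle[of x y a] dist_triangle[of a y a'] by argo
qed

theorem mainTheorem10:
  fixes X :: "'a::metric_space set" and n :: nat
  assumes "\<forall>r>0. \<exists>Xr. Xr \<subseteq> X \<and> asdim_le Xr n \<and> r_dim_le r (X - Xr) n"
  shows "asdim_le X n"
  unfolding asdim_le_def
proof (intro allI impI)
  fix r :: real
  assume "0 < r"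
  then obtain Xr where Xr: "Xr \<subseteq> X" "asdim_le Xr n" "r_dim_le r (X - Xr) n"
    using assms by blast
  obtain Bs D where Bs: "X - Xr = (\<Union>i\<le>n. Bs i)" "0 \<le> D"
      "\<And>i x y. i \<le> n \<Longrightarrow> r_chained r (Bs i) x y \<Longrightarrow> dist x y \<le> D"
    using r_dim_le_uniform_bound[OF Xr(3)] by blast
  have "r_dim_le (D + 2 * r) Xr n"
    using Xr(2) Bs(2) \<open>0 < r\<close> unfolding asdim_le_def by simp
  then obtain As E where As: "Xr = (\<Union>i\<le>n. As i)" "0 \<le> E"
      "\<And>i x y. i \<le> n \<Longrightarrow> r_chained (D + 2 * r) (As i) x y \<Longrightarrow> dist x y \<le> E"
    using r_dim_le_uniform_bound by blast
  have "X = (\<Union>i\<le>n. As i \<union> Bs i)"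
    using As(1) Bs(1) Xr(1) by blast
  moreover have "r_bounded_components r (As i \<union> Bs i)" if "i \<le> n" for i
  proof -
    have "dist x y \<le> E + 2 * (D + r)" if "r_chained r (As i \<union> Bs i) x y" for x y
      using r_chained_union_dist_le[OF Bs(3) As(3)] Bs(2) As(2) \<open>0 < r\<close> \<open>i \<le> n\<close> that
      by simp
    then show ?thesis
      unfolding r_bounded_components_iff by blast
  qed
  ultimately show "r_dim_le r X n"
    unfolding r_dim_le_def by blast
qed

end
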